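(* Let $\mathcal{H}$ be a Hilbert superspace of parity $n\in\mathbb{Z}_2$, and let $J_1,J_2$ be two fundamental symmetries for $\mathcal{H}$. Then the Hilbert-space topologies on $\mathcal{H}$ defined by the positive definite scalar products $(x,y)_{J_1}=\langle x,J_1(y)\rangle$ and $(x,y)_{J_2}=\langle x,J_2(y)\rangle$ coincide. Consequently, the algebra $\mathcal{B}(\mathcal{H})$ of continuous endomorphisms of $\mathcal{H}$ does not depend on the choice of fundamental symmetry.
   Context: A complex $\mathbb{Z}_2$-graded vector space is $\mathcal{H}=\mathcal{H}_0\oplus\mathcal{H}_1$; $|x|\in\mathbb{Z}_2$ denotes the degree of a homogeneous element $x$. A sesquilinear form $\langle-,-\rangle$ (antilinear in the first variable) is superhermitian if $\overline{\langle x,y\rangle}=(-1)^{|x||y|}\langle y,x\rangle$ for homogeneous $x,y$. It is homogeneous of degree $n$ if $\langle x,y\rangle=0$ whenever $|x|+|y|\neq n$. A Hilbert superspace of parity $n\in\mathbb{Z}_2$ is a complex $\mathbb{Z}_2$-graded vector space $\mathcal{H}$ with a superhermitian sesquilinear inner product $\langle-,-\rangle$, homogeneous of degree $n$, for which there exists a fundamental symmetry. A fundamental symmetry is an endomorphism $J$ of $\mathcal{H}$, homogeneous of degree $n$, with the following properties for all homogeneous $x,y$: - $J^2(x)=(-1)^{(n+1)|x|}x$; - $\langle J(x),J(y)\rangle=\langle x,y\rangle$; - $(x,y)_J:=\langle x,J(y)\rangle$ is a hermitian positive definite scalar product for which $\mathcal{H}$ is complete. *)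

theory Defs
  imports "HOL-Analysis.Analysis"
begin

(* Degrees are natural numbers read mod 2;
   hspace H0 H1 d is the homogeneous component of degree d mod 2. *)

definition hspace :: "'v set \<Rightarrow> 'v set \<Rightarrow> nat \<Rightarrow> 'v set" where
  "hspace H0 H1 d = (if even d then H0 else H1)"

definition z2_graded ::
  "(complex \<Rightarrow> 'v::ab_group_add \<Rightarrow> 'v) \<Rightarrow> 'v set \<Rightarrow> 'v set \<Rightarrow> bool" where
  "z2_graded smul H0 H1 \<longleftrightarrow>
     vector_space smul \<and> module.subspace smul H0 \<and> module.subspace smul H1 \<and>
     H0 \<inter> H1 = {0} \<and> (\<forall>x. \<exists>a\<in>H0. \<exists>b\<in>H1. x = a + b)"

definition sesquilinear ::
  "(complex \<Rightarrow> 'v::ab_group_add \<Rightarrow> 'v) \<Rightarrow> ('v \<Rightarrow> 'v \<Rightarrow> complex) \<Rightarrow> bool" where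
  "sesquilinear smul B \<longleftrightarrow>
     (\<forall>x x' y. B (x + x') y = B x y + B x' y) \<and>
     (\<forall>x y y'. B x (y + y') = B x y + B x y') \<and>
     (\<forall>c x y. B (smul c x) y = cnj c * B x y) \<and>
     (\<forall>c x y. B x (smul c y) = c * B x y)"

definition superhermitian ::
  "'v set \<Rightarrow> 'v set \<Rightarrow> ('v \<Rightarrow> 'v \<Rightarrow> complex) \<Rightarrow> bool" where
  "superhermitian H0 H1 B \<longleftrightarrow>
     (\<forall>d e x y. d < 2 \<longrightarrow> e < 2 \<longrightarrow> x \<in> hspace H0 H1 d \<longrightarrow> y \<in> hspace H0 H1 e \<longrightarrow>
        cnj (B x y) = (-1) ^ (d * e) * B y x)"

definition form_homogeneous ::
  "'v set \<Rightarrow> 'v set \<Rightarrow> ('v \<Rightarrow> 'v \<Rightarrow> complex) \<Rightarrow> nat \<Rightarrow> bool" where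
  "form_homogeneous H0 H1 B n \<longleftrightarrow>
     (\<forall>d e x y. d < 2 \<longrightarrow> e < 2 \<longrightarrow> x \<in> hspace H0 H1 d \<longrightarrow> y \<in> hspace H0 H1 e \<longrightarrow>
        (d + e) mod 2 \<noteq> n mod 2 \<longrightarrow> B x y = 0)"

definition Jnorm :: "('v \<Rightarrow> 'v \<Rightarrow> complex) \<Rightarrow> ('v \<Rightarrow> 'v) \<Rightarrow> 'v \<Rightarrow> real" where
  "Jnorm B J x = sqrt (Re (B x (J x)))"

definition Jcomplete :: "('v::ab_group_add \<Rightarrow> 'v \<Rightarrow> complex) \<Rightarrow> ('v \<Rightarrow> 'v) \<Rightarrow> bool" where
  "Jcomplete B J \<longleftrightarrow>
     (\<forall>s :: nat \<Rightarrow> 'v.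
        (\<forall>e>0. \<exists>N. \<forall>m\<ge>N. \<forall>k\<ge>N. Jnorm B J (s m - s k) < e) \<longrightarrow>
        (\<exists>L. \<forall>e>0. \<exists>N. \<forall>m\<ge>N. Jnorm B J (s m - L) < e))"

definition fundamental_symmetry ::
  "(complex \<Rightarrow> 'v::ab_group_add \<Rightarrow> 'v) \<Rightarrow> 'v set \<Rightarrow> 'v set \<Rightarrow> ('v \<Rightarrow> 'v \<Rightarrow> complex)
   \<Rightarrow> nat \<Rightarrow> ('v \<Rightarrow> 'v) \<Rightarrow> bool" where
  "fundamental_symmetry smul H0 H1 B n J \<longleftrightarrow>
     Vector_Spaces.linear smul smul J \<and>
     (\<forall>d x. d < 2 \<longrightarrow> x \<in> hspace H0 H1 d \<longrightarrow> J x \<in> hspace H0 H1 (d + n)) \<and>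
     (\<forall>d x. d < 2 \<longrightarrow> x \<in> hspace H0 H1 d \<longrightarrow> J (J x) = smul ((-1) ^ ((n + 1) * d)) x) \<and>
     (\<forall>d e x y. d < 2 \<longrightarrow> e < 2 \<longrightarrow> x \<in> hspace H0 H1 d \<longrightarrow> y \<in> hspace H0 H1 e \<longrightarrow>
        B (J x) (J y) = B x y) \<and>
     (\<forall>x y. B x (J y) = cnj (B y (J x))) \<and>
     (\<forall>x. x \<noteq> 0 \<longrightarrow> 0 < Re (B x (J x))) \<and>
     Jcomplete B J"

definition hilbert_superspace ::
  "(complex \<Rightarrow> 'v::ab_group_add \<Rightarrow> 'v) \<Rightarrow> 'v set \<Rightarrow> 'v set \<Rightarrow> ('v \<Rightarrow> 'v \<Rightarrow> complex)
   \<Rightarrow> nat \<Rightarrow> bool" where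
  "hilbert_superspace smul H0 H1 B n \<longleftrightarrow>
     n < 2 \<and> z2_graded smul H0 H1 \<and> sesquilinear smul B \<and> superhermitian H0 H1 B \<and>
     form_homogeneous H0 H1 B n \<and> (\<exists>J. fundamental_symmetry smul H0 H1 B n J)"

definition Jtopology :: "('v::ab_group_add \<Rightarrow> 'v \<Rightarrow> complex) \<Rightarrow> ('v \<Rightarrow> 'v) \<Rightarrow> 'v topology" where
  "Jtopology B J = topology (\<lambda>U. \<forall>x\<in>U. \<exists>e>0. \<forall>y. Jnorm B J (y - x) < e \<longrightarrow> y \<in> U)"

definition bounded_endos ::
  "(complex \<Rightarrow> 'v::ab_group_add \<Rightarrow> 'v) \<Rightarrow> ('v \<Rightarrow> 'v \<Rightarrow> complex) \<Rightarrow> ('v \<Rightarrow> 'v) \<Rightarrow> ('v \<Rightarrow> 'v) set" where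
  "bounded_endos smul B J =
     {T. Vector_Spaces.linear smul smul T \<and> continuous_map (Jtopology B J) (Jtopology B J) T}"

end

theory Submission
  imports Defs
begin

text \<open>
  Both norms are complete and, because every fundamental symmetry is invertible, the
  functional \<open>x \<mapsto> \<langle>x, J\<^sub>2 l\<rangle> = \<langle>x, J\<^sub>1 w\<rangle>\<close> is continuous for the \<open>J\<^sub>1\<close>-norm.  Hence the
  sublevel sets \<open>{x. \<parallel>x\<parallel>\<^sub>2 \<le> k}\<close> are closed in the complete \<open>J\<^sub>1\<close>-metric and cover the
  space; by Baire's theorem one of them contains a \<open>J\<^sub>1\<close>-ball, and scaling that ball shows
  \<open>\<parallel>x\<parallel>\<^sub>2 \<le> C \<parallel>x\<parallel>\<^sub>1\<close>.  By symmetry the two norms are equivalent, so they define the same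
  topology and therefore the same continuous endomorphisms.
\<close>

locale J_inner_product =
  fixes smul :: "complex \<Rightarrow> 'v::ab_group_add \<Rightarrow> 'v" and B :: "'v \<Rightarrow> 'v \<Rightarrow> complex"
    and J :: "'v \<Rightarrow> 'v"
  assumes sesquilinear: "sesquilinear smul B"
    and linear_J: "Vector_Spaces.linear smul smul J"
    and hermitian: "\<And>x y. B x (J y) = cnj (B y (J x))"
    and positive: "\<And>x. x \<noteq> 0 \<Longrightarrow> 0 < Re (B x (J x))"
begin

sublocale J: Vector_Spaces.linear smul smul J by (rule linear_J)

definition jinner :: "'v \<Rightarrow> 'v \<Rightarrow> complex" where "jinner x y = B x (J y)"

abbreviation jnorm :: "'v \<Rightarrow> real" where "jnorm \<equiv> Jnorm B J"

lemma B_add_left: "B (x + x') y = B x y + B x' y"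
  and B_add_right: "B x (y + y') = B x y + B x y'"
  and B_scale_left: "B (smul c x) y = cnj c * B x y"
  and B_scale_right: "B x (smul c y) = c * B x y"
  using sesquilinear unfolding sesquilinear_def by auto

lemma B_diff_left: "B (x - x') y = B x y - B x' y"
  by (metis B_add_left diff_add_cancel eq_diff_eq)

lemma B_diff_right: "B x (y - y') = B x y - B x y'"
  by (metis B_add_right diff_add_cancel eq_diff_eq)

lemma jinner_add_left: "jinner (x + x') y = jinner x y + jinner x' y"
  unfolding jinner_def by (rule B_add_left)

lemma jinner_add_right: "jinner x (y + y') = jinner x y + jinner x y'"
  unfolding jinner_def by (simp add: J.add B_add_right)

lemma jinner_diff_left: "jinner (x - x') y = jinner x y - jinner x' y"
  unfolding jinner_def by (rule B_diff_left)

lemma jinner_diff_right: "jinner x (y - y') = jinner x y - jinner x y'"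
  unfolding jinner_def by (simp add: J.diff B_diff_right)

lemma jinner_scale_left: "jinner (smul c x) y = cnj c * jinner x y"
  unfolding jinner_def by (rule B_scale_left)

lemma jinner_scale_right: "jinner x (smul c y) = c * jinner x y"
  unfolding jinner_def by (simp add: J.scale B_scale_right)

lemma jinner_commute: "jinner x y = cnj (jinner y x)"
  unfolding jinner_def by (rule hermitian)

lemma jinner_zero_left: "jinner 0 y = 0"
  using jinner_diff_left[of 0 0 y] by simp

lemma jinner_zero_right: "jinner x 0 = 0"
  using jinner_diff_right[of x 0 0] by simp

lemma jinner_minus_left: "jinner (- x) y = - jinner x y"
  using jinner_diff_left[of 0 x y] by (simp add: jinner_zero_left)

lemma jinner_minus_right: "jinner x (- y) = - jinner x y"
  using jinner_diff_right[of x 0 y] by (simp add: jinner_zero_right)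

lemma jinner_self_real: "jinner x x = of_real (Re (jinner x x))"
proof -
  have "Im (jinner x x) = - Im (jinner x x)"
    using arg_cong[of _ _ Im, OF jinner_commute[of x x]] by simp
  then show ?thesis by (simp add: complex_eq_iff)
qed

lemma jinner_self_nonneg: "0 \<le> Re (jinner x x)"
proof (cases "x = 0")
  case True
  then show ?thesis by (simp add: jinner_zero_left)
next
  case False
  then show ?thesis using positive[of x] by (simp add: jinner_def)
qed

lemma jnorm_eq_sqrt: "jnorm x = sqrt (Re (jinner x x))"
  unfolding Jnorm_def jinner_def ..

lemma jnorm_power2: "(jnorm x)\<^sup>2 = Re (jinner x x)"
  unfolding jnorm_eq_sqrt using jinner_self_nonneg[of x] by simp

lemma jnorm_nonneg: "0 \<le> jnorm x"
  unfolding jnorm_eq_sqrt using jinner_self_nonneg[of x] by simp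

lemma jnorm_eq_0_iff: "jnorm x = 0 \<longleftrightarrow> x = 0"
  using positive[of x] jinner_zero_left[of 0] unfolding jnorm_eq_sqrt jinner_def by force

lemma jnorm_zero: "jnorm 0 = 0"
  by (simp add: jnorm_eq_0_iff)

lemma jnorm_minus: "jnorm (- x) = jnorm x"
  unfolding jnorm_eq_sqrt by (simp add: jinner_minus_left jinner_minus_right)

lemma jnorm_minus_commute: "jnorm (x - y) = jnorm (y - x)"
  by (metis jnorm_minus minus_diff_eq)

lemma jnorm_scale: "jnorm (smul c x) = cmod c * jnorm x"
proof -
  have "c * cnj c = of_real ((cmod c)\<^sup>2)"
    by (rule complex_norm_square[symmetric])
  then have "jinner (smul c x) (smul c x) = of_real ((cmod c)\<^sup>2) * jinner x x"
    by (simp add: jinner_scale_left jinner_scale_right del: of_real_power)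
  then have "Re (jinner (smul c x) (smul c x)) = (cmod c)\<^sup>2 * Re (jinner x x)"
    by simp
  then show ?thesis
    unfolding jnorm_eq_sqrt by (simp add: real_sqrt_mult)
qed

lemma jinner_cauchy_schwarz: "cmod (jinner x y) \<le> jnorm x * jnorm y"
proof (cases "y = 0")
  case True
  then show ?thesis by (simp add: jinner_zero_right jnorm_zero)
next
  case False
  define a where "a = Re (jinner y y)"
  define p where "p = jinner y x"
  have a_pos: "a > 0"
    using positive[OF False] unfolding a_def jinner_def .
  have yy: "jinner y y = of_real a"
    unfolding a_def by (rule jinner_self_real)
  have xy: "jinner x y = cnj p"
    unfolding p_def by (rule jinner_commute)
  have pp: "p * cnj p = of_real ((cmod p)\<^sup>2)" "cnj p * p = of_real ((cmod p)\<^sup>2)"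
    by (simp_all only: complex_norm_square mult.commute)
  \<comment> \<open>expand \<open>0 \<le> \<parallel>x - c y\<parallel>\<^sup>2\<close> at the minimising coefficient \<open>c = p / a\<close>\<close>
  define c where "c = p / of_real a"
  have "jinner (x - smul c y) (x - smul c y)
      = jinner x x - c * jinner x y - cnj c * jinner y x + cnj c * c * jinner y y"
    by (simp add: jinner_diff_left jinner_diff_right jinner_scale_left jinner_scale_right
        algebra_simps)
  also have "\<dots> = jinner x x - of_real ((cmod p)\<^sup>2 / a)"
    unfolding yy xy c_def p_def[symmetric] using a_pos by (simp add: field_simps pp)
  finally have "(cmod p)\<^sup>2 / a \<le> Re (jinner x x)"
    using jinner_self_nonneg[of "x - smul c y"] by simp
  then have "(cmod p)\<^sup>2 \<le> (jnorm x * jnorm y)\<^sup>2"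
    using a_pos by (simp add: field_simps power_mult_distrib jnorm_power2 a_def)
  then have "cmod p \<le> jnorm x * jnorm y"
    by (rule power2_le_imp_le) (simp add: jnorm_nonneg)
  then show ?thesis
    unfolding xy by simp
qed

lemma jnorm_triangle: "jnorm (x + y) \<le> jnorm x + jnorm y"
proof -
  have "Re (jinner x y + jinner y x) = 2 * Re (jinner x y)"
    by (subst jinner_commute[of y x]) simp
  also have "\<dots> \<le> 2 * (jnorm x * jnorm y)"
    using complex_Re_le_cmod[of "jinner x y"] jinner_cauchy_schwarz[of x y] by linarith
  finally have "(jnorm (x + y))\<^sup>2 \<le> (jnorm x + jnorm y)\<^sup>2"
    unfolding jnorm_power2 power2_sum by (simp add: jinner_add_left jinner_add_right)
  then show ?thesis
    by (rule power2_le_imp_le) (simp add: jnorm_nonneg)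
qed

definition jdist :: "'v \<Rightarrow> 'v \<Rightarrow> real" where "jdist x y = jnorm (x - y)"

sublocale jmetric: Metric_space UNIV jdist
proof
  show "jdist x z \<le> jdist x y + jdist y z" for x y z
    using jnorm_triangle[of "x - y" "y - z"] unfolding jdist_def by simp
qed (auto simp: jdist_def jnorm_nonneg jnorm_eq_0_iff intro: jnorm_minus_commute)

lemma limitin_jmetric:
  "limitin jmetric.mtopology s l sequentially \<longleftrightarrow> (\<forall>e>0. \<exists>K. \<forall>m\<ge>K. jnorm (s m - l) < e)"
  unfolding jmetric.limitin_metric jdist_def eventually_sequentially by simp

lemma jmetric_mcomplete:
  assumes "Jcomplete B J"
  shows jmetric.mcomplete
  unfolding jmetric.mcomplete_def jmetric.MCauchy_def limitin_jmetric
  using assms unfolding Jcomplete_def jdist_def by metis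

end

locale J_pair =
  first: J_inner_product smul B J1 + second: J_inner_product smul B J2
  for smul :: "complex \<Rightarrow> 'v::ab_group_add \<Rightarrow> 'v" and B J1 J2 +
  assumes surj_J1: "surj J1"
begin

lemma jnorm2_power2_le:
  obtains c where "c \<ge> 0"
    "\<And>x. (second.jnorm l)\<^sup>2 \<le> second.jnorm x * second.jnorm l + c * first.jnorm (x - l)"
proof -
  obtain w where w: "J2 l = J1 w"
    using surj_J1 by (metis surjD)
  have "(second.jnorm l)\<^sup>2
      \<le> second.jnorm x * second.jnorm l + first.jnorm w * first.jnorm (x - l)" for x
  proof -
    have "(second.jnorm l)\<^sup>2 \<le> cmod (B l (J2 l))"
      unfolding second.jnorm_power2 second.jinner_def by (rule complex_Re_le_cmod)
    also have "B l (J2 l) = second.jinner x l - first.jinner (x - l) w"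
      unfolding first.jinner_def second.jinner_def using w by (simp add: first.B_diff_left)
    also have "cmod \<dots> \<le> cmod (second.jinner x l) + cmod (first.jinner (x - l) w)"
      by (rule norm_triangle_ineq4)
    also have "\<dots> \<le> second.jnorm x * second.jnorm l + first.jnorm (x - l) * first.jnorm w"
      by (intro add_mono first.jinner_cauchy_schwarz second.jinner_cauchy_schwarz)
    finally show ?thesis
      by (simp add: mult.commute)
  qed
  with first.jnorm_nonneg show thesis
    by (rule that)
qed

lemma jnorm2_le_at_limit:
  fixes k :: real
  assumes bounded: "\<And>m. second.jnorm (s m) \<le> k"
    and limit: "limitin first.jmetric.mtopology s l sequentially"
  shows "second.jnorm l \<le> k"
proof -
  obtain c where c: "c \<ge> 0"
    "\<And>x. (second.jnorm l)\<^sup>2 \<le> second.jnorm x * second.jnorm l + c * first.jnorm (x - l)"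
    using jnorm2_power2_le[of l] by blast
  have "(second.jnorm l)\<^sup>2 \<le> k * second.jnorm l + e" if "e > 0" for e
  proof -
    obtain m where m: "first.jnorm (s m - l) < e / (c + 1)"
    proof -
      have "e / (c + 1) > 0"
        using \<open>e > 0\<close> \<open>c \<ge> 0\<close> by simp
      then show thesis
        using limit that unfolding first.limitin_jmetric by blast
    qed
    have "(second.jnorm l)\<^sup>2 \<le> k * second.jnorm l + c * first.jnorm (s m - l)"
      using c(2)[of "s m"] bounded[of m] second.jnorm_nonneg[of l]
      by (meson add_right_mono mult_right_mono order_trans)
    also have "c * first.jnorm (s m - l) \<le> c * (e / (c + 1))"
      using m \<open>c \<ge> 0\<close> by (intro mult_left_mono) simp_all
    also have "\<dots> \<le> e"
      using \<open>c \<ge> 0\<close> \<open>e > 0\<close> by (simp add: field_simps)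
    finally show ?thesis by simp
  qed
  then have "second.jnorm l * second.jnorm l \<le> k * second.jnorm l"
    by (simp add: field_le_epsilon power2_eq_square)
  moreover have "0 \<le> k"
    using bounded[of 0] second.jnorm_nonneg order_trans by blast
  ultimately show ?thesis
    using second.jnorm_nonneg[of l] by (cases "second.jnorm l = 0") (auto simp: mult_le_cancel_right)
qed

lemma jnorm2_dominated_if_bounded_on_ball:
  assumes "r > 0" and bounded: "\<And>y. first.jnorm (y - x0) < r \<Longrightarrow> second.jnorm y \<le> k"
  shows "\<exists>C>0. \<forall>h. second.jnorm h \<le> C * first.jnorm h"
proof -
  have k: "second.jnorm x0 \<le> k"
    using bounded[of x0] \<open>r > 0\<close> by (simp add: first.jnorm_zero)
  then have "0 \<le> k"
    using second.jnorm_nonneg order_trans by blast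
  have "second.jnorm h \<le> 4 * k / r * first.jnorm h" for h
  proof (cases "h = 0")
    case True
    then show ?thesis by (simp add: first.jnorm_zero second.jnorm_zero)
  next
    case False
    then have h_pos: "first.jnorm h > 0"
      using first.jnorm_eq_0_iff first.jnorm_nonneg by (metis less_eq_real_def)
    define t where "t = r / (2 * first.jnorm h)"
    have t_pos: "t > 0"
      unfolding t_def using h_pos \<open>r > 0\<close> by simp
    have "first.jnorm (smul t h) = t * first.jnorm h"
      using t_pos by (simp add: first.jnorm_scale)
    also have "\<dots> = r / 2"
      unfolding t_def using h_pos by simp
    finally have "first.jnorm (smul t h) = r / 2" .
    then have "second.jnorm (x0 + smul t h) \<le> k"
      using \<open>r > 0\<close> by (intro bounded) simp
    then have "second.jnorm (smul t h) \<le> 2 * k"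
      using second.jnorm_triangle[of "x0 + smul t h" "- x0"] k by (simp add: second.jnorm_minus)
    then have "t * second.jnorm h \<le> 2 * k"
      using t_pos by (simp add: second.jnorm_scale)
    then show ?thesis
      using t_pos h_pos \<open>r > 0\<close> unfolding t_def by (simp add: field_simps)
  qed
  moreover have "4 * k / r * first.jnorm h \<le> (4 * k + 1) / r * first.jnorm h" for h
    using \<open>r > 0\<close> first.jnorm_nonneg[of h] by (intro mult_right_mono divide_right_mono) simp_all
  moreover have "(4 * k + 1) / r > 0"
    using \<open>0 \<le> k\<close> \<open>r > 0\<close> by simp
  ultimately have "\<forall>h. second.jnorm h \<le> (4 * k + 1) / r * first.jnorm h"
    using order_trans by blast
  with \<open>(4 * k + 1) / r > 0\<close> show ?thesis
    by blast
qed

lemma jnorm2_dominated_if_complete: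
  assumes "Jcomplete B J1"
  shows "\<exists>C>0. \<forall>x. second.jnorm x \<le> C * first.jnorm x"
proof -
  define F where "F k = {x. second.jnorm x \<le> real k}" for k :: nat
  have closed: "closedin first.jmetric.mtopology (F k)" for k
    unfolding first.jmetric.metric_closedin_iff_sequentially_closed
  proof (intro conjI allI impI)
    fix s l
    assume "range s \<subseteq> F k \<and> limitin first.jmetric.mtopology s l sequentially"
    then show "l \<in> F k"
      unfolding F_def using jnorm2_le_at_limit[of s "real k" l] by auto
  qed simp
  have "\<Union> (range F) = UNIV"
    unfolding F_def using real_arch_simple by blast
  then have "first.jmetric.mtopology interior_of \<Union> (range F) \<noteq> {}"
    using interior_of_topspace[of first.jmetric.mtopology] by simp
  then have "\<exists>k. first.jmetric.mtopology interior_of F k \<noteq> {}"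
    using first.jmetric.metric_Baire_category_alt[OF first.jmetric_mcomplete[OF assms], of "range F"]
      closed by auto
  then obtain k x0 where x0: "x0 \<in> first.jmetric.mtopology interior_of F k"
    by blast
  then obtain r where "r > 0" "first.jmetric.mball x0 r \<subseteq> first.jmetric.mtopology interior_of F k"
    using openin_interior_of[of first.jmetric.mtopology "F k"]
    unfolding first.jmetric.openin_mtopology by blast
  then have "first.jmetric.mball x0 r \<subseteq> F k"
    using interior_of_subset[of first.jmetric.mtopology "F k"] by blast
  then have "second.jnorm y \<le> real k" if "first.jnorm (y - x0) < r" for y
    using that first.jnorm_minus_commute[of y x0]
    by (auto simp: F_def first.jmetric.mball_def first.jdist_def)
  with \<open>r > 0\<close> show ?thesis
    by (rule jnorm2_dominated_if_bounded_on_ball)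
qed

end

lemma open_condition_if_dominated:
  fixes f g :: "'v::ab_group_add \<Rightarrow> real"
  assumes "C > 0" "\<And>x. f x \<le> C * g x"
    and "\<forall>x\<in>U. \<exists>e>0. \<forall>y. f (y - x) < e \<longrightarrow> y \<in> U"
  shows "\<forall>x\<in>U. \<exists>e>0. \<forall>y. g (y - x) < e \<longrightarrow> y \<in> U"
proof
  fix x
  assume "x \<in> U"
  with assms(3) obtain e where e: "e > 0" "\<And>y. f (y - x) < e \<Longrightarrow> y \<in> U"
    by blast
  have "y \<in> U" if "g (y - x) < e / C" for y
  proof (rule e(2))
    have "C * g (y - x) < e"
      using that \<open>C > 0\<close> by (simp add: field_simps)
    then show "f (y - x) < e"
      using assms(2)[of "y - x"] by linarith
  qed
  moreover have "e / C > 0"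
    using e(1) \<open>C > 0\<close> by simp
  ultimately show "\<exists>e>0. \<forall>y. g (y - x) < e \<longrightarrow> y \<in> U"
    by blast
qed

lemma Jtopology_eq_if_equivalent:
  assumes "C > 0" "\<And>x. Jnorm B J1 x \<le> C * Jnorm B J2 x"
    and "C' > 0" "\<And>x. Jnorm B J2 x \<le> C' * Jnorm B J1 x"
  shows "Jtopology B J1 = Jtopology B J2"
proof -
  have "(\<lambda>U. \<forall>x\<in>U. \<exists>e>0. \<forall>y. Jnorm B J1 (y - x) < e \<longrightarrow> y \<in> U)
      = (\<lambda>U. \<forall>x\<in>U. \<exists>e>0. \<forall>y. Jnorm B J2 (y - x) < e \<longrightarrow> y \<in> U)"
  proof (intro ext iffI)
    show "\<forall>x\<in>U. \<exists>e>0. \<forall>y. Jnorm B J2 (y - x) < e \<longrightarrow> y \<in> U"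
      if "\<forall>x\<in>U. \<exists>e>0. \<forall>y. Jnorm B J1 (y - x) < e \<longrightarrow> y \<in> U" for U
      using assms(1,2) that by (rule open_condition_if_dominated)
    show "\<forall>x\<in>U. \<exists>e>0. \<forall>y. Jnorm B J1 (y - x) < e \<longrightarrow> y \<in> U"
      if "\<forall>x\<in>U. \<exists>e>0. \<forall>y. Jnorm B J2 (y - x) < e \<longrightarrow> y \<in> U" for U
      using assms(3,4) that by (rule open_condition_if_dominated)
  qed
  then show ?thesis
    unfolding Jtopology_def by simp
qed

lemma fundamental_symmetry_surj:
  assumes fs: "fundamental_symmetry smul H0 H1 B n J"
    and decomposition: "\<forall>x. \<exists>a\<in>H0. \<exists>b\<in>H1. x = a + b"
  shows "surj J"
proof -
  have "Vector_Spaces.linear smul smul J"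
    and JJ: "\<And>d x. d < 2 \<Longrightarrow> x \<in> hspace H0 H1 d \<Longrightarrow> J (J x) = smul ((-1) ^ ((n + 1) * d)) x"
    using fs unfolding fundamental_symmetry_def by blast+
  then interpret J: Vector_Spaces.linear smul smul J
    by simp
  \<comment> \<open>on the degree-\<open>d\<close> component, \<open>J\<close> is inverted by \<open>(-1)^((n+1)d) J\<close>\<close>
  have homogeneous: "x \<in> range J" if "d < 2" "x \<in> hspace H0 H1 d" for d x
  proof -
    define c :: complex where "c = (-1) ^ ((n + 1) * d)"
    have "c * c = 1"
      unfolding c_def power_mult_distrib[symmetric] by simp
    then have "J (smul c (J x)) = x"
      using JJ[OF that] unfolding c_def by (simp add: J.scale)
    then show ?thesis
      by (metis rangeI)
  qed
  show ?thesis
  proof (rule surjI[of _ "\<lambda>z. SOME w. J w = z"], rule someI_ex)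
    fix z
    obtain a b where "a \<in> H0" "b \<in> H1" "z = a + b"
      using decomposition by blast
    then obtain wa wb where "a = J wa" "b = J wb"
      using homogeneous[of 0 a] homogeneous[of 1 b] by (auto simp: hspace_def)
    then show "\<exists>w. J w = z"
      using \<open>z = a + b\<close> by (metis J.add)
  qed
qed

lemma J_inner_product_if_fundamental_symmetry:
  assumes "sesquilinear smul B" "fundamental_symmetry smul H0 H1 B n J"
  shows "J_inner_product smul B J"
proof (rule J_inner_product.intro)
  show "Vector_Spaces.linear smul smul J" "\<And>x y. B x (J y) = cnj (B y (J x))"
    "\<And>x. x \<noteq> 0 \<Longrightarrow> 0 < Re (B x (J x))"
    using assms(2) unfolding fundamental_symmetry_def by blast+
qed (rule assms(1))

lemma J_pair_if_fundamental_symmetries: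
  assumes "sesquilinear smul B"
    and "fundamental_symmetry smul H0 H1 B n J1" "fundamental_symmetry smul H0 H1 B n J2"
    and "\<forall>x. \<exists>a\<in>H0. \<exists>b\<in>H1. x = a + b"
  shows "J_pair smul B J1 J2"
  using J_inner_product_if_fundamental_symmetry[OF assms(1,2)]
    J_inner_product_if_fundamental_symmetry[OF assms(1,3)] fundamental_symmetry_surj[OF assms(2,4)]
  by (simp add: J_pair_def J_pair_axioms_def)

theorem mainTheorem1:
  fixes smul :: "complex \<Rightarrow> 'v::ab_group_add \<Rightarrow> 'v"
    and H0 H1 :: "'v set" and B :: "'v \<Rightarrow> 'v \<Rightarrow> complex" and n :: nat
    and J1 J2 :: "'v \<Rightarrow> 'v"
  assumes "hilbert_superspace smul H0 H1 B n"
    and "fundamental_symmetry smul H0 H1 B n J1"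
    and "fundamental_symmetry smul H0 H1 B n J2"
  shows "Jtopology B J1 = Jtopology B J2 \<and> bounded_endos smul B J1 = bounded_endos smul B J2"
proof -
  have sesq: "sesquilinear smul B" and decomposition: "\<forall>x. \<exists>a\<in>H0. \<exists>b\<in>H1. x = a + b"
    using assms(1) unfolding hilbert_superspace_def z2_graded_def by blast+
  have pair12: "J_pair smul B J1 J2" and pair21: "J_pair smul B J2 J1"
    using J_pair_if_fundamental_symmetries[OF sesq assms(2,3) decomposition]
      J_pair_if_fundamental_symmetries[OF sesq assms(3,2) decomposition] .
  have complete1: "Jcomplete B J1" and complete2: "Jcomplete B J2"
    using assms(2,3) unfolding fundamental_symmetry_def by simp_all
  obtain C where "C > 0" "\<And>x. Jnorm B J2 x \<le> C * Jnorm B J1 x"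
    using J_pair.jnorm2_dominated_if_complete[OF pair12 complete1] by blast
  moreover obtain C' where "C' > 0" "\<And>x. Jnorm B J1 x \<le> C' * Jnorm B J2 x"
    using J_pair.jnorm2_dominated_if_complete[OF pair21 complete2] by blast
  ultimately have "Jtopology B J1 = Jtopology B J2"
    by (intro Jtopology_eq_if_equivalent)
  then show ?thesis
    unfolding bounded_endos_def by simp
qed

end
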